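(* Let $(\mathcal S,\mathcal C,\mathcal R,\mathcal K)$ be a deterministic reaction network system with species set $\mathcal S$ containing a species $X_1$, and let $(\hat{\mathcal S},\hat{\mathcal C},\hat{\mathcal R},\hat{\mathcal K})$ be a $Z$-definite ACR system with $X_1\in\hat{\mathcal S}$ and $Z\notin\mathcal S$. If the union system of $(\mathcal S,\mathcal C,\mathcal R,\mathcal K)$ and $(\hat{\mathcal S},\hat{\mathcal C},\hat{\mathcal R},\hat{\mathcal K})$ admits a positive steady state, then the union system is an ACR system and $X_1$ is an ACR species of it.
   Context: A deterministic reaction network system $(\mathcal S,\mathcal C,\mathcal R,\mathcal K)$ with species $S_1,\dots,S_n$ is modeled by an ODE $\frac{d}{dt}x(t)=f(x(t))$ with $f(x)=\sum_{y\to y'\in\mathcal R}\kappa_{y\to y'}\eta_y(x)(y'-y)$ for rate functions $\eta_y$ (e.g. mass action $\eta_y(x)=x^y=\prod_i x_i^{y_i}$). Such a system is an ACR system if it admits a positive steady state and there is a species whose value is the same at every positive steady state (that species is an ACR species). A deterministic system $\frac{d}{dt}\hat x=\hat f(\hat x)$ is a $Z$-definite ACR system if $Z$ is one of its species and there is $c>0$ such that for every positive vector $\hat x$ with $\hat f_Z(\hat x)=0$ (the component of $\hat f$ for $Z$), the $X_1$-coordinate of $\hat x$ equals $c$ (here $X_1$ is a species of the system). Union system: if $\mathcal S=\{X_1,\dots,X_d,Y_1,\dots,Y_k\}$ and $\hat{\mathcal S}=\{X_1,\dots,X_d,Z_1,\dots,Z_{\hat k}\}$ with ODEs $x'=f(x)$,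 $\hat x'=\hat f(\hat x)$, the union system is the ODE on $\bar x=(x_1,\dots,x_d,y_1,\dots,y_k,z_1,\dots,z_{\hat k})$ given by $\bar x'=Ef+\hat E\hat f$, i.e. the right-hand sides of both systems are added on shared species, while species belonging to only one system evolve by that system's right-hand side (evaluated at the corresponding coordinates). *)

theory Defs
  imports Main "HOL-Library.Multiset" Complex_Main
begin

text \<open>A complex is a vector of nonnegative integer
stoichiometric coefficients, i.e. a function 'a \<Rightarrow> nat (supported on the species set).
A state is a function 'a \<Rightarrow> real (only the coordinates of species are relevant).
A reaction is a pair (y, y') of complexes, meaning y \<rightarrow> y'.\<close>

type_synonym 'a complex = "'a \<Rightarrow> nat"
type_synonym 'a reaction = "'a complex \<times> 'a complex"
type_synonym 'a state = "'a \<Rightarrow> real"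

record 'a rn_system =
  species   :: "'a set"
  complexes :: "'a complex set"
  reactions :: "'a reaction set"
  rate_const :: "'a reaction \<Rightarrow> real"
  rate_fun  :: "'a complex \<Rightarrow> 'a state \<Rightarrow> real"

definition rn_system_wf :: "'a rn_system \<Rightarrow> bool" where
  "rn_system_wf N \<longleftrightarrow>
     finite (species N) \<and> finite (complexes N) \<and> finite (reactions N) \<and>
     (\<forall>y\<in>complexes N. \<forall>i. i \<notin> species N \<longrightarrow> y i = 0) \<and>
     reactions N \<subseteq> complexes N \<times> complexes N \<and>
     (\<forall>(y, y')\<in>reactions N. y \<noteq> y') \<and>
     (\<forall>r\<in>reactions N. rate_const N r > 0) \<and>
     (\<forall>y x x'. (\<forall>i\<in>species N. x i = x' i) \<longrightarrow> rate_fun N y x = rate_fun N y x')"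

definition rn_field :: "'a rn_system \<Rightarrow> 'a state \<Rightarrow> 'a state" where
  "rn_field N x = (\<lambda>i. \<Sum>r\<in>reactions N.
      rate_const N r * rate_fun N (fst r) x * (real (snd r i) - real (fst r i)))"

definition positive_on :: "'a set \<Rightarrow> 'a state \<Rightarrow> bool" where
  "positive_on S x \<longleftrightarrow> (\<forall>i\<in>S. x i > 0)"

definition positive_steady_state :: "'a set \<Rightarrow> ('a state \<Rightarrow> 'a state) \<Rightarrow> 'a state \<Rightarrow> bool" where
  "positive_steady_state S F x \<longleftrightarrow> positive_on S x \<and> (\<forall>i\<in>S. F x i = 0)"

definition ACR_species :: "'a set \<Rightarrow> ('a state \<Rightarrow> 'a state) \<Rightarrow> 'a \<Rightarrow> bool" where
  "ACR_species S F X \<longleftrightarrow> X \<in> S \<and> (\<exists>x. positive_steady_state S F x) \<and>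
     (\<forall>x x'. positive_steady_state S F x \<longrightarrow> positive_steady_state S F x' \<longrightarrow> x X = x' X)"

definition ACR_system :: "'a set \<Rightarrow> ('a state \<Rightarrow> 'a state) \<Rightarrow> bool" where
  "ACR_system S F \<longleftrightarrow> (\<exists>x. positive_steady_state S F x) \<and> (\<exists>X. ACR_species S F X)"

definition Z_definite_ACR :: "'a set \<Rightarrow> ('a state \<Rightarrow> 'a state) \<Rightarrow> 'a \<Rightarrow> 'a \<Rightarrow> bool" where
  "Z_definite_ACR S F Z X1 \<longleftrightarrow> Z \<in> S \<and> X1 \<in> S \<and>
     (\<exists>c>0. \<forall>x. positive_on S x \<and> F x Z = 0 \<longrightarrow> x X1 = c)"

definition union_species :: "'a rn_system \<Rightarrow> 'a rn_system \<Rightarrow> 'a set" where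
  "union_species N M = species N \<union> species M"

definition union_field :: "'a rn_system \<Rightarrow> 'a rn_system \<Rightarrow> 'a state \<Rightarrow> 'a state" where
  "union_field N M x = (\<lambda>i. (if i \<in> species N then rn_field N x i else 0)
                          + (if i \<in> species M then rn_field M x i else 0))"

end

theory Submission
  imports Defs
begin

text \<open>Since \<open>Z\<close> is not a species of the first system, the \<open>Z\<close>-component of the union
field is the \<open>Z\<close>-component of the second system alone. Hence at every positive steady state
of the union, the state is positive on the second system's species and annihilates its
\<open>Z\<close>-component, so \<open>Z\<close>-definiteness forces the \<open>X\<^sub>1\<close>-coordinate to the same constant \<open>c\<close>.\<close>

lemma union_field_right_only:
  assumes "i \<notin> species N" and "i \<in> species M"
  shows "union_field N M x i = rn_field M x i"
  using assms by (simp add: union_field_def)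

lemma positive_steady_state_union_imp_positive_on_right:
  assumes "positive_steady_state (union_species N M) (union_field N M) x"
  shows "positive_on (species M) x"
  using assms by (simp add: positive_steady_state_def positive_on_def union_species_def)

lemma Z_definite_ACR_union_constant:
  assumes "Z_definite_ACR (species M) (rn_field M) Z X"
    and "Z \<notin> species N"
  obtains c where "\<And>x. positive_steady_state (union_species N M) (union_field N M) x \<Longrightarrow> x X = c"
proof -
  obtain c where Z: "Z \<in> species M"
    and c: "\<And>x. positive_on (species M) x \<Longrightarrow> rn_field M x Z = 0 \<Longrightarrow> x X = c"
    using assms(1) unfolding Z_definite_ACR_def by blast
  have "x X = c" if steady: "positive_steady_state (union_species N M) (union_field N M) x" for x
  proof (rule c)
    show "positive_on (species M) x"
      using steady by (rule positive_steady_state_union_imp_positive_on_right)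
    have "union_field N M x Z = 0"
      using steady Z by (simp add: positive_steady_state_def union_species_def)
    then show "rn_field M x Z = 0"
      using union_field_right_only[OF assms(2) Z] by simp
  qed
  then show thesis by (rule that)
qed

lemma ACR_speciesI:
  assumes "X \<in> S"
    and "\<exists>x. positive_steady_state S F x"
    and "\<And>x. positive_steady_state S F x \<Longrightarrow> x X = c"
  shows "ACR_species S F X"
  using assms unfolding ACR_species_def by metis

lemma ACR_species_imp_ACR_system:
  assumes "ACR_species S F X"
  shows "ACR_system S F"
  using assms unfolding ACR_system_def ACR_species_def by blast

theorem mainTheorem1:
  fixes N Nhat :: "'a rn_system" and X1 Z :: 'a
  assumes "rn_system_wf N"
    and "rn_system_wf Nhat"
    and "X1 \<in> species N"
    and "Z_definite_ACR (species Nhat) (rn_field Nhat) Z X1"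
    and "Z \<notin> species N"
    and "\<exists>x. positive_steady_state (union_species N Nhat) (union_field N Nhat) x"
  shows "ACR_system (union_species N Nhat) (union_field N Nhat)
         \<and> ACR_species (union_species N Nhat) (union_field N Nhat) X1"
proof -
  have X1: "X1 \<in> union_species N Nhat"
    using assms(3) by (simp add: union_species_def)
  obtain c where c:
    "\<And>x. positive_steady_state (union_species N Nhat) (union_field N Nhat) x \<Longrightarrow> x X1 = c"
    using Z_definite_ACR_union_constant[OF assms(4,5)] by blast
  have "ACR_species (union_species N Nhat) (union_field N Nhat) X1"
    using X1 assms(6) c by (rule ACR_speciesI)
  then show ?thesis
    by (simp add: ACR_species_imp_ACR_system)
qed

end
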